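(* Let $n\geq2$ and let $U\in F(J(P_n)^2)\setminus G(J(P_n)^2)$. Then there exists $V\in G(J(P_n)^2)$ such that $V>_{\mathcal R}U$ and $V$ divides $U$.
   Context: Let $K$ be a field. For $m\geq 1$, $P_m$ is the path graph on vertices $x_1,\ldots,x_m$ with edges $\{x_i,x_{i+1}\}$. The cover ideal $J(P_m)$ is generated by the monomials $\prod_{x\in C}x$ with $C$ a minimal vertex cover of $P_m$. For a monomial ideal $I$, $G(I)$ is its set of minimal monomial generators and $F(I^2)=\{uv:u,v\in G(I)\}$. The rooted list $\mathcal R(P_m)$ is defined recursively: $\mathcal R(P_1)$ empty; $\mathcal R(P_2)=x_1,x_2$; $\mathcal R(P_3)=x_2,x_1x_3$; $\mathcal R(P_4)=x_1x_3,x_2x_3,x_2x_4$; for $m\geq5$, if $\mathcal R(P_{m-2})=u_1,\ldots,u_r$ and $\mathcal R(P_{m-3})=v_1,\ldots,v_s$, then $\mathcal R(P_m)=x_{m-1}u_1,\ldots,x_{m-1}u_r,x_mx_{m-2}v_1,\ldots,x_mx_{m-2}v_s$; it lists each element of $G(J(P_m))$ once. With $\mathcal R(P_m)=u_1,\ldots,u_q$, each $M\in F(J(P_m)^2)$ can be written $u_1^{a_1}\cdots u_q^{a_q}$ with $a_i\geq0$, $\sum a_i=2$; the maximal expression of $M$ is the one with lexicographically largest exponent vector. The rooted order on $F(J(P_m)^2)$: $M>_{\mathcal R}N$ iff the exponent vector of the maximal expression of $M$ is lexicographically larger than that of $N$. *)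

theory Defs
  imports Main "HOL-Library.Multiset" "HOL-Library.List_Lexorder"
begin

(* Monomials in x_1,...,x_m are represented as multisets of variable indices:
   the monomial x_1^{e_1}...x_m^{e_m} is the multiset with count i = e_i.
   Monomial multiplication is multiset sum (+), divisibility is (\<subseteq>#). *)

definition is_vertex_cover :: "nat \<Rightarrow> nat set \<Rightarrow> bool" where
  "is_vertex_cover m C \<longleftrightarrow> C \<subseteq> {1..m} \<and> (\<forall>i. 1 \<le> i \<and> i < m \<longrightarrow> i \<in> C \<or> Suc i \<in> C)"

definition is_min_vertex_cover :: "nat \<Rightarrow> nat set \<Rightarrow> bool" where
  "is_min_vertex_cover m C \<longleftrightarrow> is_vertex_cover m C \<and> (\<forall>D. D \<subset> C \<longrightarrow> \<not> is_vertex_cover m D)"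

text \<open>G(J(P_m)): minimal monomial generators of the cover ideal of the path P_m.\<close>
definition GJ :: "nat \<Rightarrow> nat multiset set" where
  "GJ m = {mset_set C | C. is_min_vertex_cover m C}"

definition FJ2 :: "nat \<Rightarrow> nat multiset set" where
  "FJ2 m = {u + v | u v. u \<in> GJ m \<and> v \<in> GJ m}"

definition GJ2 :: "nat \<Rightarrow> nat multiset set" where
  "GJ2 m = {M \<in> FJ2 m. \<forall>N \<in> FJ2 m. N \<subseteq># M \<longrightarrow> N = M}"

fun rooted_list :: "nat \<Rightarrow> nat multiset list" where
  "rooted_list 0 = []"
| "rooted_list (Suc 0) = []"
| "rooted_list (Suc (Suc 0)) = [{#1#}, {#2#}]"
| "rooted_list (Suc (Suc (Suc 0))) = [{#2#}, {#1, 3#}]"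
| "rooted_list (Suc (Suc (Suc (Suc 0)))) = [{#1, 3#}, {#2, 3#}, {#2, 4#}]"
| "rooted_list (Suc (Suc (Suc (Suc (Suc k))))) =
     map (\<lambda>u. add_mset (k + 4) u) (rooted_list (k + 3)) @
     map (\<lambda>v. add_mset (k + 5) (add_mset (k + 3) v)) (rooted_list (k + 2))"

text \<open>Expressions M = u_1^{a_1}...u_q^{a_q} with sum a_i = 2, as exponent vectors (lists).\<close>
definition expressions :: "nat \<Rightarrow> nat multiset \<Rightarrow> nat list set" where
  "expressions m M = {a. length a = length (rooted_list m) \<and> sum_list a = 2 \<and>
      (\<Sum>i<length (rooted_list m). repeat_mset (a ! i) (rooted_list m ! i)) = M}"

text \<open>Maximal expression: lexicographically largest exponent vector
  (List_Lexorder gives the lexicographic order on lists; all vectors have equal length).\<close>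
definition max_expression :: "nat \<Rightarrow> nat multiset \<Rightarrow> nat list" where
  "max_expression m M = Max (expressions m M)"

definition rooted_gt :: "nat \<Rightarrow> nat multiset \<Rightarrow> nat multiset \<Rightarrow> bool" where
  "rooted_gt m M N \<longleftrightarrow> max_expression m M > max_expression m N"

end

theory Submission
  imports Defs
begin

(* Write U = u_A u_B according to its maximal expression, whose first nonzero exponent sits at the
   position i of A in the rooted list, and take a minimal generator V = u_C u_D of J(P_n)^2 properly
   dividing U, where A, B, C, D are minimal vertex covers. Let k be the largest vertex at which C + D
   has smaller multiplicity than A + B. Cutting C and D at k and continuing them above k by A and B,
   in a suitable pairing, gives minimal covers C', D' with V = u_C' u_D' and C' colexicographically
   smaller than A (when k = n, C itself already is). The rooted list is strictly increasing in the
   colexicographic order of supports, so C' precedes A, and the expression of V through C' and D'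
   is lexicographically larger than the maximal expression of U. *)

section \<open>Minimal vertex covers of a path\<close>

lemma is_min_vertex_cover_iff:
  "is_min_vertex_cover m C \<longleftrightarrow>
     is_vertex_cover m C \<and> (\<forall>t\<in>C. (1 < t \<and> t - 1 \<notin> C) \<or> (t < m \<and> Suc t \<notin> C))"
proof
  assume min: "is_min_vertex_cover m C"
  then have cover: "is_vertex_cover m C" by (simp add: is_min_vertex_cover_def)
  have "(1 < t \<and> t - 1 \<notin> C) \<or> (t < m \<and> Suc t \<notin> C)" if "t \<in> C" for t
  proof -
    have "\<not> is_vertex_cover m (C - {t})"
      using min that unfolding is_min_vertex_cover_def by blast
    then obtain i where i: "1 \<le> i" "i < m" "i \<notin> C - {t}" "Suc i \<notin> C - {t}"
      using cover unfolding is_vertex_cover_def by blast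
    then have "i \<in> C \<or> Suc i \<in> C" using cover unfolding is_vertex_cover_def by blast
    then show ?thesis using i by (cases "i = t") auto
  qed
  with cover show "is_vertex_cover m C \<and> (\<forall>t\<in>C. (1 < t \<and> t - 1 \<notin> C) \<or> (t < m \<and> Suc t \<notin> C))"
    by blast
next
  assume H: "is_vertex_cover m C \<and> (\<forall>t\<in>C. (1 < t \<and> t - 1 \<notin> C) \<or> (t < m \<and> Suc t \<notin> C))"
  have "\<not> is_vertex_cover m D" if "D \<subset> C" for D
  proof
    assume D: "is_vertex_cover m D"
    obtain t where t: "t \<in> C" "t \<notin> D" using \<open>D \<subset> C\<close> by blast
    have t_range: "1 \<le> t" "t \<le> m" using H t unfolding is_vertex_cover_def by auto
    have "(1 < t \<and> t - 1 \<notin> C) \<or> (t < m \<and> Suc t \<notin> C)" using H t by blast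
    then show False
    proof
      assume below: "1 < t \<and> t - 1 \<notin> C"
      then have "1 \<le> t - 1" "t - 1 < m" "Suc (t - 1) = t" using t_range by auto
      then have "t - 1 \<in> D \<or> t \<in> D" using D unfolding is_vertex_cover_def by metis
      then show False using below t \<open>D \<subset> C\<close> by blast
    next
      assume "t < m \<and> Suc t \<notin> C"
      then show False using D t t_range \<open>D \<subset> C\<close> unfolding is_vertex_cover_def by blast
    qed
  qed
  with H show "is_min_vertex_cover m C" unfolding is_min_vertex_cover_def by blast
qed

lemma is_min_vertex_coverI:
  assumes "C \<subseteq> {1..m}"
    and "\<And>i. 1 \<le> i \<Longrightarrow> i < m \<Longrightarrow> i \<in> C \<or> Suc i \<in> C"
    and "\<And>t. t \<in> C \<Longrightarrow> (1 < t \<and> t - 1 \<notin> C) \<or> (t < m \<and> Suc t \<notin> C)"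
  shows "is_min_vertex_cover m C"
  using assms by (simp add: is_min_vertex_cover_iff is_vertex_cover_def)

lemma min_cover_subset: "is_min_vertex_cover m C \<Longrightarrow> C \<subseteq> {1..m}"
  by (simp add: is_min_vertex_cover_def is_vertex_cover_def)

lemma min_cover_finite: "is_min_vertex_cover m C \<Longrightarrow> finite C"
  using min_cover_subset finite_subset by blast

lemma min_cover_edge: "is_min_vertex_cover m C \<Longrightarrow> 1 \<le> i \<Longrightarrow> i < m \<Longrightarrow> i \<in> C \<or> Suc i \<in> C"
  by (simp add: is_min_vertex_cover_def is_vertex_cover_def)

lemma min_cover_edge_below: "is_min_vertex_cover m C \<Longrightarrow> 1 < t \<Longrightarrow> t \<le> m \<Longrightarrow> t - 1 \<in> C \<or> t \<in> C"
  using min_cover_edge[of m C "t - 1"] by simp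

lemma min_cover_private_edge:
  "is_min_vertex_cover m C \<Longrightarrow> t \<in> C \<Longrightarrow> (1 < t \<and> t - 1 \<notin> C) \<or> (t < m \<and> Suc t \<notin> C)"
  by (simp add: is_min_vertex_cover_iff)

lemma min_covers_short_path: "m \<le> 1 \<Longrightarrow> {C. is_min_vertex_cover m C} = {{}}"
proof (intro equalityI subsetI)
  fix C assume "m \<le> 1" and "C \<in> {C. is_min_vertex_cover m C}"
  then have C: "is_min_vertex_cover m C" and "C \<subseteq> {1..m}" using min_cover_subset by auto
  have "t \<notin> C" for t
    using min_cover_private_edge[OF C, of t] \<open>m \<le> 1\<close> \<open>C \<subseteq> {1..m}\<close> by fastforce
  then show "C \<in> {{}}" by blast
qed (auto simp: is_min_vertex_cover_iff is_vertex_cover_def)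

lemma min_covers_2: "{C. is_min_vertex_cover 2 C} = {{1}, {2}}"
proof (intro equalityI subsetI)
  fix C assume "C \<in> {C. is_min_vertex_cover 2 C}"
  then have C: "is_min_vertex_cover 2 C" by simp
  have "1 \<in> C \<or> 2 \<in> C" using min_cover_edge[OF C, of 1] by (simp add: numeral_2_eq_2)
  moreover have "1 \<in> C \<Longrightarrow> 2 \<notin> C"
    using min_cover_private_edge[OF C, of 1] by (simp add: numeral_2_eq_2)
  moreover have "C \<subseteq> {1, 2}" using min_cover_subset[OF C] by auto
  ultimately show "C \<in> {{1}, {2}}" by blast
qed (auto intro: is_min_vertex_coverI)

lemma min_cover_remove_last:
  assumes C: "is_min_vertex_cover (k + 3) C" and last: "k + 3 \<notin> C"
  shows "k + 2 \<in> C" and "is_min_vertex_cover (k + 1) (C - {k + 2})"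
proof -
  show in_C: "k + 2 \<in> C" using min_cover_edge[OF C, of "k + 2"] last by (simp add: numeral_eq_Suc)
  have sub: "C - {k + 2} \<subseteq> {1..k + 1}"
  proof
    fix t assume t: "t \<in> C - {k + 2}"
    then have "t \<in> {1..k + 3}" using min_cover_subset[OF C] by blast
    then show "t \<in> {1..k + 1}" using t last by (cases "t = k + 3") auto
  qed
  show "is_min_vertex_cover (k + 1) (C - {k + 2})"
  proof (rule is_min_vertex_coverI[OF sub])
    fix i assume "1 \<le> i" "i < k + 1"
    then show "i \<in> C - {k + 2} \<or> Suc i \<in> C - {k + 2}" using min_cover_edge[OF C, of i] by simp
  next
    fix t assume t: "t \<in> C - {k + 2}"
    then have "t \<le> k + 1" using sub by auto
    then show "(1 < t \<and> t - 1 \<notin> C - {k + 2}) \<or> (t < k + 1 \<and> Suc t \<notin> C - {k + 2})"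
      using min_cover_private_edge[OF C, of t] t in_C by auto
  qed
qed

lemma min_cover_remove_last_two:
  assumes C: "is_min_vertex_cover (k + 3) C" and last: "k + 3 \<in> C"
  shows "k + 1 \<in> C" and "k + 2 \<notin> C" and "is_min_vertex_cover k (C - {k + 3, k + 1})"
proof -
  show not_C: "k + 2 \<notin> C" using min_cover_private_edge[OF C last] by simp
  then show in_C: "k + 1 \<in> C" using min_cover_edge[OF C, of "k + 1"] by simp
  have sub: "C - {k + 3, k + 1} \<subseteq> {1..k}"
  proof
    fix t assume t: "t \<in> C - {k + 3, k + 1}"
    then have "t \<in> {1..k + 3}" using min_cover_subset[OF C] by blast
    then show "t \<in> {1..k}" using t not_C by (cases "t = k + 2") auto
  qed
  show "is_min_vertex_cover k (C - {k + 3, k + 1})"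
  proof (rule is_min_vertex_coverI[OF sub])
    fix i assume "1 \<le> i" "i < k"
    then show "i \<in> C - {k + 3, k + 1} \<or> Suc i \<in> C - {k + 3, k + 1}"
      using min_cover_edge[OF C, of i] by simp
  next
    fix t assume t: "t \<in> C - {k + 3, k + 1}"
    then have "t \<le> k" using sub by auto
    then show "(1 < t \<and> t - 1 \<notin> C - {k + 3, k + 1}) \<or> (t < k \<and> Suc t \<notin> C - {k + 3, k + 1})"
      using min_cover_private_edge[OF C, of t] t in_C by auto
  qed
qed

lemma min_cover_extend_one:
  assumes S: "is_min_vertex_cover (k + 1) S"
  shows "is_min_vertex_cover (k + 3) (insert (k + 2) S)"
proof (rule is_min_vertex_coverI)
  show "insert (k + 2) S \<subseteq> {1..k + 3}" using min_cover_subset[OF S] by fastforce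
next
  fix i assume "1 \<le> i" "i < k + 3"
  then show "i \<in> insert (k + 2) S \<or> Suc i \<in> insert (k + 2) S"
    using min_cover_edge[OF S, of i] by (cases "i < k + 1") auto
next
  fix t assume t: "t \<in> insert (k + 2) S"
  have small: "s \<le> k + 1" if "s \<in> S" for s using that min_cover_subset[OF S] by fastforce
  show "(1 < t \<and> t - 1 \<notin> insert (k + 2) S) \<or> (t < k + 3 \<and> Suc t \<notin> insert (k + 2) S)"
  proof (cases "t = k + 2")
    case True
    then show ?thesis using small[of "Suc t"] by auto
  next
    case False
    then have "t \<in> S" using t by blast
    then show ?thesis using min_cover_private_edge[OF S \<open>t \<in> S\<close>] small[of t] by auto
  qed
qed

lemma min_cover_extend_two:
  assumes S: "is_min_vertex_cover k S"
  shows "is_min_vertex_cover (k + 3) (insert (k + 3) (insert (k + 1) S))"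
proof (rule is_min_vertex_coverI)
  show "insert (k + 3) (insert (k + 1) S) \<subseteq> {1..k + 3}" using min_cover_subset[OF S] by fastforce
next
  fix i assume "1 \<le> i" "i < k + 3"
  then show "i \<in> insert (k + 3) (insert (k + 1) S) \<or> Suc i \<in> insert (k + 3) (insert (k + 1) S)"
    using min_cover_edge[OF S, of i] by (cases "i < k") auto
next
  fix t assume t: "t \<in> insert (k + 3) (insert (k + 1) S)"
  have small: "s \<le> k" if "s \<in> S" for s using that min_cover_subset[OF S] by fastforce
  show "(1 < t \<and> t - 1 \<notin> insert (k + 3) (insert (k + 1) S)) \<or>
      (t < k + 3 \<and> Suc t \<notin> insert (k + 3) (insert (k + 1) S))"
  proof (cases "t \<in> S")
    case True
    then show ?thesis using min_cover_private_edge[OF S True] small[of t] by auto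
  next
    case False
    then have "t = k + 3 \<or> t = k + 1" using t by blast
    then show ?thesis using small[of "Suc t"] small[of "t - 1"] by auto
  qed
qed

lemma min_covers_recursion:
  "{C. is_min_vertex_cover (k + 3) C} =
     insert (k + 2) ` {S. is_min_vertex_cover (k + 1) S} \<union>
     (\<lambda>S. insert (k + 3) (insert (k + 1) S)) ` {S. is_min_vertex_cover k S}"
proof (intro equalityI subsetI)
  fix C assume "C \<in> {C. is_min_vertex_cover (k + 3) C}"
  then have C: "is_min_vertex_cover (k + 3) C" by simp
  show "C \<in> insert (k + 2) ` {S. is_min_vertex_cover (k + 1) S} \<union>
      (\<lambda>S. insert (k + 3) (insert (k + 1) S)) ` {S. is_min_vertex_cover k S}"
  proof (cases "k + 3 \<in> C")
    case True
    then have "C = insert (k + 3) (insert (k + 1) (C - {k + 3, k + 1}))"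
      using min_cover_remove_last_two(1)[OF C] by blast
    then show ?thesis using min_cover_remove_last_two(3)[OF C True] by blast
  next
    case False
    then have "C = insert (k + 2) (C - {k + 2})" using min_cover_remove_last(1)[OF C] by blast
    then show ?thesis using min_cover_remove_last(2)[OF C False] by blast
  qed
next
  fix C assume "C \<in> insert (k + 2) ` {S. is_min_vertex_cover (k + 1) S} \<union>
      (\<lambda>S. insert (k + 3) (insert (k + 1) S)) ` {S. is_min_vertex_cover k S}"
  then show "C \<in> {C. is_min_vertex_cover (k + 3) C}"
    using min_cover_extend_one[of k] min_cover_extend_two[of k] by blast
qed

section \<open>The rooted list\<close>

definition colex_less :: "nat set \<Rightarrow> nat set \<Rightarrow> bool" where
  "colex_less S T \<longleftrightarrow> (\<exists>k\<in>T. k \<notin> S \<and> (\<forall>j>k. j \<in> S \<longleftrightarrow> j \<in> T))"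

lemma colex_lessI: "k \<in> T \<Longrightarrow> k \<notin> S \<Longrightarrow> (\<And>j. k < j \<Longrightarrow> j \<in> S \<longleftrightarrow> j \<in> T) \<Longrightarrow> colex_less S T"
  unfolding colex_less_def by blast

lemma colex_less_irrefl: "\<not> colex_less S S"
  unfolding colex_less_def by blast

lemma colex_less_trans: assumes "colex_less S T" "colex_less T R" shows "colex_less S R"
proof -
  obtain k1 where k1: "k1 \<in> T" "k1 \<notin> S" "\<forall>j>k1. j \<in> S \<longleftrightarrow> j \<in> T"
    using assms(1) colex_less_def by blast
  obtain k2 where k2: "k2 \<in> R" "k2 \<notin> T" "\<forall>j>k2. j \<in> T \<longleftrightarrow> j \<in> R"
    using assms(2) colex_less_def by blast
  have "k1 \<noteq> k2" using k1 k2 by blast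
  then show ?thesis
    using k1 k2 by (cases "k1 < k2") (auto intro!: colex_lessI[of "max k1 k2"])
qed

lemma asymp_colex_less: "asymp colex_less"
  using colex_less_trans colex_less_irrefl by (blast intro: asympI)

lemma colex_less_insert:
  assumes "colex_less S T" "a \<notin> S" "a \<notin> T"
  shows "colex_less (insert a S) (insert a T)"
proof -
  obtain k where k: "k \<in> T" "k \<notin> S" "\<forall>j>k. j \<in> S \<longleftrightarrow> j \<in> T" using assms(1) colex_less_def by blast
  then have "k \<noteq> a" using assms by blast
  then show ?thesis using k by (intro colex_lessI[of k]) auto
qed

fun rooted_covers :: "nat \<Rightarrow> nat set list" where
  "rooted_covers 0 = []"
| "rooted_covers (Suc 0) = []"
| "rooted_covers (Suc (Suc 0)) = [{1}, {2}]"
| "rooted_covers (Suc (Suc (Suc 0))) = [{2}, {1, 3}]"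
| "rooted_covers (Suc (Suc (Suc (Suc 0)))) = [{1, 3}, {2, 3}, {2, 4}]"
| "rooted_covers (Suc (Suc (Suc (Suc (Suc k))))) =
     map (\<lambda>u. insert (k + 4) u) (rooted_covers (k + 3)) @
     map (\<lambda>v. insert (k + 5) (insert (k + 3) v)) (rooted_covers (k + 2))"

lemma rooted_covers_subset: "S \<in> set (rooted_covers m) \<Longrightarrow> S \<subseteq> {1..m}"
proof (induction m arbitrary: S rule: rooted_covers.induct)
  case (6 k)
  then show ?case by (auto simp: numeral_eq_Suc) fastforce+
qed auto

lemma rooted_list_eq_map_mset_set: "rooted_list m = map mset_set (rooted_covers m)"
proof (induction m rule: rooted_covers.induct)
  case (6 k)
  have "add_mset (k + 4) (mset_set S) = mset_set (insert (k + 4) S)"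
    if "S \<in> set (rooted_covers (k + 3))" for S
  proof -
    have "S \<subseteq> {1..k + 3}" using rooted_covers_subset[OF that] .
    then have "finite S" "k + 4 \<notin> S" using finite_subset by auto
    then show ?thesis by simp
  qed
  moreover have "add_mset (k + 5) (add_mset (k + 3) (mset_set S)) =
      mset_set (insert (k + 5) (insert (k + 3) S))"
    if "S \<in> set (rooted_covers (k + 2))" for S
  proof -
    have "S \<subseteq> {1..k + 2}" using rooted_covers_subset[OF that] .
    then have "finite S" "k + 5 \<notin> S" "k + 3 \<notin> S" using finite_subset by auto
    then show ?thesis by simp
  qed
  ultimately show ?case using 6 by (simp add: numeral_eq_Suc)
qed simp_all

lemma set_rooted_covers: "2 \<le> m \<Longrightarrow> set (rooted_covers m) = {C. is_min_vertex_cover m C}"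
proof (induction m rule: rooted_covers.induct)
  case 3
  show ?case using min_covers_2 by (simp add: numeral_2_eq_2)
next
  case 4
  have "{C. is_min_vertex_cover 3 C} = {{2}, {3, 1}}"
    using min_covers_recursion[of 0] min_covers_short_path[of 0] min_covers_short_path[of 1]
    by (simp add: numeral_2_eq_2 insert_commute)
  then show ?case by (simp add: numeral_3_eq_3 insert_commute)
next
  case 5
  have "{C. is_min_vertex_cover 4 C} = {{3, 1}, {3, 2}, {4, 2}}"
    using min_covers_recursion[of 1] min_covers_2 min_covers_short_path[of 1]
    by (simp add: numeral_eq_Suc insert_commute)
  then show ?case by (simp add: numeral_eq_Suc insert_commute)
next
  case (6 k)
  then have "set (rooted_covers (k + 3)) = {S. is_min_vertex_cover (k + 3) S}"
    and "set (rooted_covers (k + 2)) = {S. is_min_vertex_cover (k + 2) S}"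
    by (simp_all add: numeral_eq_Suc)
  then show ?case using min_covers_recursion[of "k + 2"] by (simp add: numeral_eq_Suc)
qed auto

lemma sorted_rooted_covers: "sorted_wrt colex_less (rooted_covers m)"
proof (induction m rule: rooted_covers.induct)
  case 3
  show ?case by (auto intro!: colex_lessI[of 2])
next
  case 4
  show ?case by (auto intro!: colex_lessI[of 3])
next
  case 5
  have "colex_less {1, 3} {2, 3}" by (auto intro!: colex_lessI[of 2])
  moreover have "colex_less {1, 3} {2, 4}" "colex_less {2, 3} {2, 4}"
    by (auto intro!: colex_lessI[of 4])
  ultimately show ?case by (simp add: numeral_eq_Suc)
next
  case (6 k)
  have low: "sorted_wrt colex_less (map (insert (k + 4)) (rooted_covers (k + 3)))"
    unfolding sorted_wrt_map
  proof (rule sorted_wrt_mono_rel[of _ colex_less])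
    fix S T assume ST: "S \<in> set (rooted_covers (k + 3))" "T \<in> set (rooted_covers (k + 3))"
      and "colex_less S T"
    moreover have "k + 4 \<notin> S" "k + 4 \<notin> T" using rooted_covers_subset[OF ST(1)] rooted_covers_subset[OF ST(2)] by auto
    ultimately show "colex_less (insert (k + 4) S) (insert (k + 4) T)"
      using colex_less_insert by blast
  qed (use 6 in \<open>simp add: numeral_eq_Suc\<close>)
  have high: "sorted_wrt colex_less
      (map (\<lambda>S. insert (k + 5) (insert (k + 3) S)) (rooted_covers (k + 2)))"
    unfolding sorted_wrt_map
  proof (rule sorted_wrt_mono_rel[of _ colex_less])
    fix S T assume ST: "S \<in> set (rooted_covers (k + 2))" "T \<in> set (rooted_covers (k + 2))"
      and "colex_less S T"
    moreover have "k + 3 \<notin> S" "k + 3 \<notin> T" "k + 5 \<notin> insert (k + 3) S" "k + 5 \<notin> insert (k + 3) T"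
      using rooted_covers_subset[OF ST(1)] rooted_covers_subset[OF ST(2)] by auto
    ultimately show "colex_less (insert (k + 5) (insert (k + 3) S)) (insert (k + 5) (insert (k + 3) T))"
      using colex_less_insert by blast
  qed (use 6 in \<open>simp add: numeral_eq_Suc\<close>)
  have low_high: "colex_less (insert (k + 4) S) (insert (k + 5) (insert (k + 3) T))"
    if "S \<in> set (rooted_covers (k + 3))" "T \<in> set (rooted_covers (k + 2))" for S T
    using rooted_covers_subset[OF that(1)] rooted_covers_subset[OF that(2)]
    by (intro colex_lessI[of "k + 5"]) auto
  show ?case using low high low_high by (auto simp: sorted_wrt_append numeral_eq_Suc)
qed simp_all

section \<open>Exchanging covers\<close>

definition splice_at :: "nat set \<Rightarrow> nat set \<Rightarrow> nat \<Rightarrow> nat set" where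
  "splice_at P Q k = {t \<in> P. t \<le> k} \<union> {t \<in> Q. k < t}"

lemma mem_splice_at [simp]: "t \<in> splice_at P Q k \<longleftrightarrow> (if t \<le> k then t \<in> P else t \<in> Q)"
  by (auto simp: splice_at_def)

lemma finite_splice_at: "finite P \<Longrightarrow> finite Q \<Longrightarrow> finite (splice_at P Q k)"
  unfolding splice_at_def by simp

lemma splice_at_min_cover:
  assumes P: "is_min_vertex_cover m P" and Q: "is_min_vertex_cover m Q"
    and k: "1 \<le> k" "k < m" and seam: "(k \<in> P) \<noteq> (Suc k \<in> Q)"
  shows "is_min_vertex_cover m (splice_at P Q k)"
proof (rule is_min_vertex_coverI)
  show "splice_at P Q k \<subseteq> {1..m}"
    using min_cover_subset[OF P] min_cover_subset[OF Q] unfolding splice_at_def by auto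
next
  fix i assume "1 \<le> i" "i < m"
  then show "i \<in> splice_at P Q k \<or> Suc i \<in> splice_at P Q k"
    using min_cover_edge[OF P, of i] min_cover_edge[OF Q, of i] seam by (cases "i = k") auto
next
  fix t assume t: "t \<in> splice_at P Q k"
  consider "t < k" | "t = k" | "t = Suc k" | "Suc k < t" by linarith
  then show "(1 < t \<and> t - 1 \<notin> splice_at P Q k) \<or> (t < m \<and> Suc t \<notin> splice_at P Q k)"
  proof cases
    case 1
    then show ?thesis using t min_cover_private_edge[OF P, of t] by auto
  next
    case 4
    then show ?thesis using t min_cover_private_edge[OF Q, of t] by auto
  qed (use t seam k in auto)
qed

lemma count_mset_set_of_bool: "finite S \<Longrightarrow> count (mset_set S) t = of_bool (t \<in> S)"
  by simp

locale min_cover_deficit =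
  fixes m k :: nat and A B C D :: "nat set"
  assumes min_covers: "is_min_vertex_cover m A" "is_min_vertex_cover m B"
      "is_min_vertex_cover m C" "is_min_vertex_cover m D"
    and dominated: "\<And>t. of_bool (t \<in> C) + of_bool (t \<in> D) \<le> (of_bool (t \<in> A) + of_bool (t \<in> B) :: nat)"
    and deficit: "of_bool (k \<in> C) + of_bool (k \<in> D) < (of_bool (k \<in> A) + of_bool (k \<in> B) :: nat)"
    and agree_above:
      "\<And>t. k < t \<Longrightarrow> of_bool (t \<in> C) + of_bool (t \<in> D) = (of_bool (t \<in> A) + of_bool (t \<in> B) :: nat)"
begin

lemma dominated_both: "t \<in> C \<Longrightarrow> t \<in> D \<Longrightarrow> t \<in> A \<and> t \<in> B"
  using dominated[of t] by (auto simp: of_bool_def split: if_splits)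

lemma dominated_some: "t \<in> C \<or> t \<in> D \<Longrightarrow> t \<in> A \<or> t \<in> B"
  using dominated[of t] by (auto simp: of_bool_def split: if_splits)

lemma deficit_cases:
  "(k \<notin> C \<and> k \<notin> D \<and> (k \<in> A \<or> k \<in> B)) \<or> ((k \<in> C) \<noteq> (k \<in> D) \<and> k \<in> A \<and> k \<in> B)"
  using deficit by (auto simp: of_bool_def split: if_splits)

lemma deficit_range: "1 \<le> k" "k \<le> m"
  using deficit_cases min_cover_subset[OF min_covers(1)] min_cover_subset[OF min_covers(2)] by auto

lemma deficit_at_end:
  assumes "k = m" shows "colex_less C A"
proof -
  have not_CD: "m \<notin> C \<and> m \<notin> D"
  proof (rule ccontr)
    assume "\<not> (m \<notin> C \<and> m \<notin> D)"
    then have half: "(m \<in> C) \<noteq> (m \<in> D)" and "m \<in> A" "m \<in> B" using deficit_cases assms by auto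
    then have "1 < m" "m - 1 \<notin> A" "m - 1 \<notin> B"
      using min_cover_private_edge[OF min_covers(1)] min_cover_private_edge[OF min_covers(2)] by auto
    then have "m - 1 \<notin> C" "m - 1 \<notin> D" using dominated_some by blast+
    then show False
      using half \<open>1 < m\<close> min_cover_edge_below[OF min_covers(3)] min_cover_edge_below[OF min_covers(4)] by blast
  qed
  have "m \<in> A"
  proof (rule ccontr)
    assume "m \<notin> A"
    then have "m \<in> B" using deficit_cases assms by auto
    then have "1 < m" "m - 1 \<notin> B" using min_cover_private_edge[OF min_covers(2)] by auto
    then have "m - 1 \<in> A" "m - 1 \<in> C" "m - 1 \<in> D"
      using \<open>m \<notin> A\<close> not_CD min_cover_edge_below[OF min_covers(1)]
        min_cover_edge_below[OF min_covers(3)] min_cover_edge_below[OF min_covers(4)] by blast+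
    then show False using dominated_both \<open>m - 1 \<notin> B\<close> by blast
  qed
  then show ?thesis
    using not_CD min_cover_subset[OF min_covers(1)] min_cover_subset[OF min_covers(3)]
    by (intro colex_lessI[of m]) auto
qed

lemma splice_partners_uncovered:
  assumes "k < m" "k \<notin> C" "k \<notin> D"
  shows "(k \<in> C) \<noteq> (Suc k \<in> A)" "(k \<in> D) \<noteq> (Suc k \<in> B)" "colex_less (splice_at C A k) A"
proof -
  have "Suc k \<in> C" "Suc k \<in> D"
    using assms deficit_range min_cover_edge[OF min_covers(3)] min_cover_edge[OF min_covers(4)] by blast+
  then have up: "Suc k \<in> A" "Suc k \<in> B" using dominated_both by blast+
  then show "(k \<in> C) \<noteq> (Suc k \<in> A)" "(k \<in> D) \<noteq> (Suc k \<in> B)" using assms by auto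
  have "k \<in> A"
  proof (rule ccontr)
    assume "k \<notin> A"
    then have "k \<in> B" using deficit_cases by blast
    then have "1 < k" "k - 1 \<notin> B" using up min_cover_private_edge[OF min_covers(2)] by auto
    then have "k - 1 \<in> A" "k - 1 \<in> C" "k - 1 \<in> D"
      using \<open>k \<notin> A\<close> assms min_cover_edge_below[OF min_covers(1) \<open>1 < k\<close>]
        min_cover_edge_below[OF min_covers(3) \<open>1 < k\<close>] min_cover_edge_below[OF min_covers(4) \<open>1 < k\<close>]
      by auto
    then show False using dominated_both \<open>k - 1 \<notin> B\<close> by blast
  qed
  then show "colex_less (splice_at C A k) A" using assms by (intro colex_lessI[of k]) auto
qed

lemma half_covered_successor:
  assumes "k < m" "(k \<in> C) \<noteq> (k \<in> D)"
  shows "(Suc k \<in> A) \<noteq> (Suc k \<in> B)"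
proof
  assume same: "(Suc k \<in> A) = (Suc k \<in> B)"
  have "k \<in> A" "k \<in> B" using assms deficit_cases by auto
  show False
  proof (cases "Suc k \<in> A")
    case True
    then have "1 < k" "k - 1 \<notin> A" "k - 1 \<notin> B"
      using same \<open>k \<in> A\<close> \<open>k \<in> B\<close> min_cover_private_edge[OF min_covers(1)]
        min_cover_private_edge[OF min_covers(2)] by auto
    then have "k - 1 \<notin> C" "k - 1 \<notin> D" using dominated_some by blast+
    then show False using assms \<open>1 < k\<close> min_cover_edge_below[OF min_covers(3) \<open>1 < k\<close>]
        min_cover_edge_below[OF min_covers(4) \<open>1 < k\<close>] by auto
  next
    case False
    then have "Suc k \<notin> C" "Suc k \<notin> D" using same dominated_some by blast+
    then show False using assms deficit_range min_cover_edge[OF min_covers(3)]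
        min_cover_edge[OF min_covers(4)] by blast
  qed
qed

lemma splice_partners_half_covered:
  assumes "k < m" "(k \<in> C) \<noteq> (k \<in> D)"
  obtains X Y where "(X = C \<and> Y = D) \<or> (X = D \<and> Y = C)"
    "(k \<in> X) \<noteq> (Suc k \<in> A)" "(k \<in> Y) \<noteq> (Suc k \<in> B)" "colex_less (splice_at X A k) A"
proof -
  have "k \<in> A" "k \<in> B" using assms deficit_cases by auto
  have one_up: "(Suc k \<in> A) \<noteq> (Suc k \<in> B)" using assms by (rule half_covered_successor)
  define X where "X = (if (k \<in> C) \<noteq> (Suc k \<in> A) then C else D)"
  define Y where "Y = (if (k \<in> C) \<noteq> (Suc k \<in> A) then D else C)"
  have XY: "(X = C \<and> Y = D) \<or> (X = D \<and> Y = C)" and "(k \<in> X) \<noteq> (k \<in> Y)"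
    and seams: "(k \<in> X) \<noteq> (Suc k \<in> A)" "(k \<in> Y) \<noteq> (Suc k \<in> B)"
    using assms one_up unfolding X_def Y_def by auto
  have "colex_less (splice_at X A k) A"
  proof (cases "k \<in> X")
    case False
    then show ?thesis using \<open>k \<in> A\<close> by (intro colex_lessI[of k]) auto
  next
    case True
    then have "Suc k \<in> B" "k \<notin> Y" using seams one_up \<open>(k \<in> X) \<noteq> (k \<in> Y)\<close> by auto
    then have "1 < k" "k - 1 \<notin> B" using \<open>k \<in> B\<close> min_cover_private_edge[OF min_covers(2)] by auto
    moreover have "is_min_vertex_cover m Y" using XY min_covers by blast
    ultimately have "k - 1 \<in> Y" using \<open>k \<notin> Y\<close> \<open>k < m\<close> min_cover_edge_below by fastforce
    then have "k - 1 \<in> A" "k - 1 \<notin> X"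
      using XY \<open>k - 1 \<notin> B\<close> dominated_some dominated_both by blast+
    show ?thesis
    proof (rule colex_lessI[of "k - 1"])
      fix j assume "k - 1 < j"
      then have "j = k \<or> k < j" by auto
      then show "j \<in> splice_at X A k \<longleftrightarrow> j \<in> A" using True \<open>k \<in> A\<close> by auto
    qed (use \<open>k - 1 \<in> A\<close> \<open>k - 1 \<notin> X\<close> in auto)
  qed
  with XY seams show thesis using that by blast
qed

lemma splice_partners:
  assumes "k < m"
  obtains X Y where "(X = C \<and> Y = D) \<or> (X = D \<and> Y = C)"
    "(k \<in> X) \<noteq> (Suc k \<in> A)" "(k \<in> Y) \<noteq> (Suc k \<in> B)" "colex_less (splice_at X A k) A"
proof (cases "k \<in> C \<or> k \<in> D")
  case True
  then have "(k \<in> C) \<noteq> (k \<in> D)" using deficit_cases by blast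
  then show thesis using splice_partners_half_covered[OF assms] that by blast
next
  case False
  then show thesis using splice_partners_uncovered[OF assms] that by blast
qed

lemma splice_partners_mset:
  assumes "(X = C \<and> Y = D) \<or> (X = D \<and> Y = C)"
  shows "mset_set (splice_at X A k) + mset_set (splice_at Y B k) = mset_set C + mset_set D"
proof (rule multiset_eqI)
  fix t
  have fin: "finite A" "finite B" "finite C" "finite D" using min_covers min_cover_finite by blast+
  then have "finite X" "finite Y" using assms by auto
  then show "count (mset_set (splice_at X A k) + mset_set (splice_at Y B k)) t = count (mset_set C + mset_set D) t"
    using fin assms agree_above[of t]
    by (cases "t \<le> k") (auto simp: count_mset_set_of_bool finite_splice_at)
qed

lemma exchange:
  obtains C' D' where "is_min_vertex_cover m C'" "is_min_vertex_cover m D'"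
    "mset_set C' + mset_set D' = mset_set C + mset_set D" "colex_less C' A"
proof (cases "k = m")
  case True
  then show thesis using that min_covers(3,4) deficit_at_end by blast
next
  case False
  then have "k < m" using deficit_range by simp
  then obtain X Y where XY: "(X = C \<and> Y = D) \<or> (X = D \<and> Y = C)"
    "(k \<in> X) \<noteq> (Suc k \<in> A)" "(k \<in> Y) \<noteq> (Suc k \<in> B)" "colex_less (splice_at X A k) A"
    by (rule splice_partners)
  then have "is_min_vertex_cover m X" "is_min_vertex_cover m Y" using min_covers by auto
  then have "is_min_vertex_cover m (splice_at X A k)" "is_min_vertex_cover m (splice_at Y B k)"
    using splice_at_min_cover min_covers(1,2) deficit_range(1) \<open>k < m\<close> XY(2,3) by blast+
  then show thesis using that splice_partners_mset[OF XY(1)] XY(4) by blast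
qed

end

lemma min_cover_deficit_exists:
  assumes covers: "is_min_vertex_cover m A" "is_min_vertex_cover m B"
      "is_min_vertex_cover m C" "is_min_vertex_cover m D"
    and below: "mset_set C + mset_set D \<subset># mset_set A + mset_set B"
  obtains k where "min_cover_deficit m k A B C D"
proof -
  let ?c = "\<lambda>t. of_bool (t \<in> C) + of_bool (t \<in> D) :: nat"
  let ?a = "\<lambda>t. of_bool (t \<in> A) + of_bool (t \<in> B) :: nat"
  have fin: "finite A" "finite B" "finite C" "finite D" using covers min_cover_finite by blast+
  then have counts: "count (mset_set C + mset_set D) t = ?c t" "count (mset_set A + mset_set B) t = ?a t"
    for t by (simp_all add: count_mset_set_of_bool)
  have dominated: "?c t \<le> ?a t" for t
    using mset_subset_eq_count[OF subset_mset.less_imp_le[OF below]] unfolding counts .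
  define diff where "diff = {t. ?c t \<noteq> ?a t}"
  have "diff \<noteq> {}"
  proof
    assume "diff = {}"
    then have "count (mset_set C + mset_set D) t = count (mset_set A + mset_set B) t" for t
      unfolding counts diff_def by blast
    then have "mset_set C + mset_set D = mset_set A + mset_set B" by (rule multiset_eqI)
    then show False using below by simp
  qed
  moreover have "diff \<subseteq> A \<union> B \<union> C \<union> D" unfolding diff_def by auto
  then have "finite diff" using fin finite_subset by blast
  ultimately have top: "Max diff \<in> diff" "\<And>t. t \<in> diff \<Longrightarrow> t \<le> Max diff"
    using Max_in Max_ge by blast+
  have deficit: "?c (Max diff) < ?a (Max diff)" using top(1) dominated[of "Max diff"] unfolding diff_def by simp
  have agree_above: "?c t = ?a t" if "Max diff < t" for t
  proof -
    have "t \<notin> diff" using top(2)[of t] that by auto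
    then show ?thesis unfolding diff_def by blast
  qed
  show thesis
    by (rule that, rule min_cover_deficit.intro) (fact covers dominated deficit agree_above)+
qed

lemma min_cover_pair_exchange:
  assumes "is_min_vertex_cover m A" "is_min_vertex_cover m B"
      "is_min_vertex_cover m C" "is_min_vertex_cover m D"
    and "mset_set C + mset_set D \<subset># mset_set A + mset_set B"
  obtains C' D' where "is_min_vertex_cover m C'" "is_min_vertex_cover m D'"
    "mset_set C' + mset_set D' = mset_set C + mset_set D" "colex_less C' A"
proof -
  obtain k where "min_cover_deficit m k A B C D" using assms by (rule min_cover_deficit_exists)
  then show thesis using that by (rule min_cover_deficit.exchange)
qed

section \<open>Expressions and the rooted order\<close>

definition pair_exponents :: "nat \<Rightarrow> nat \<Rightarrow> nat \<Rightarrow> nat list" where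
  "pair_exponents q i j = map (\<lambda>t. of_bool (t = i) + of_bool (t = j)) [0..<q]"

lemma length_pair_exponents [simp]: "length (pair_exponents q i j) = q"
  by (simp add: pair_exponents_def)

lemma nth_pair_exponents [simp]:
  "t < q \<Longrightarrow> pair_exponents q i j ! t = of_bool (t = i) + of_bool (t = j)"
  by (simp add: pair_exponents_def)

lemma sum_list_eq_1_imp_unit:
  "sum_list (b :: nat list) = 1 \<Longrightarrow> \<exists>j<length b. b = map (\<lambda>t. of_bool (t = j)) [0..<length b]"
proof (induction b)
  case (Cons x b)
  show ?case
  proof (cases x)
    case 0
    then obtain j where "j < length b" "b = map (\<lambda>t. of_bool (t = j)) [0..<length b]"
      using Cons by auto
    then show ?thesis using 0 by (intro exI[of _ "Suc j"]) (simp add: map_upt_Suc del: upt_Suc)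
  next
    case (Suc y)
    then have "y = 0" "sum_list b = 0" using Cons.prems by auto
    then have "b = map (\<lambda>t. of_bool (Suc t = 0)) [0..<length b]"
      by (intro nth_equalityI) (simp_all add: sum_list_eq_0_iff)
    then show ?thesis using Suc \<open>y = 0\<close> by (intro exI[of _ 0]) (simp add: map_upt_Suc del: upt_Suc)
  qed
qed simp

lemma sum_list_eq_2_imp_pair_exponents:
  "sum_list (b :: nat list) = 2 \<Longrightarrow> \<exists>i j. i \<le> j \<and> j < length b \<and> b = pair_exponents (length b) i j"
proof (induction b)
  case (Cons x b)
  then consider "x = 0" "sum_list b = 2" | "x = 1" "sum_list b = 1" | "x = 2" "sum_list b = 0"
    by fastforce
  then show ?case
  proof cases
    case 1
    then obtain i j where "i \<le> j" "j < length b" "b = pair_exponents (length b) i j" using Cons by auto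
    then show ?thesis using 1
      by (intro exI[of _ "Suc i"] exI[of _ "Suc j"]) (simp add: pair_exponents_def map_upt_Suc del: upt_Suc)
  next
    case 2
    then obtain j where "j < length b" "b = map (\<lambda>t. of_bool (t = j)) [0..<length b]"
      using sum_list_eq_1_imp_unit by blast
    then show ?thesis using 2
      by (intro exI[of _ 0] exI[of _ "Suc j"]) (simp add: pair_exponents_def map_upt_Suc del: upt_Suc)
  next
    case 3
    then have "b = map (\<lambda>t. of_bool (Suc t = 0) + of_bool (Suc t = 0)) [0..<length b]"
      by (intro nth_equalityI) (simp_all add: sum_list_eq_0_iff)
    then show ?thesis using 3
      by (intro exI[of _ 0] exI[of _ 0]) (simp add: pair_exponents_def map_upt_Suc del: upt_Suc)
  qed
qed simp

lemma sum_list_pair_exponents: "i < q \<Longrightarrow> j < q \<Longrightarrow> sum_list (pair_exponents q i j) = 2"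
  unfolding pair_exponents_def interv_sum_list_conv_sum_set_nat by (simp add: sum.distrib)

lemma sum_repeat_mset_pair_exponents:
  assumes "i < q" "j < q"
  shows "(\<Sum>t<q. repeat_mset (pair_exponents q i j ! t) (R t)) = R i + R j"
proof -
  have "(\<Sum>t<q. repeat_mset (pair_exponents q i j ! t) (R t)) =
      (\<Sum>t<q. (if t = i then R t else {#}) + (if t = j then R t else {#}))"
    by (rule sum.cong) (auto simp: repeat_mset_distrib)
  also have "\<dots> = R i + R j" using assms by (simp add: sum.distrib)
  finally show ?thesis .
qed

lemma pair_exponents_less:
  assumes "i \<le> j" "j < q" "k < q" "l < q" "min k l < i"
  shows "pair_exponents q i j < pair_exponents q k l"
proof -
  let ?p = "min k l"
  have "take ?p (pair_exponents q i j) = take ?p (pair_exponents q k l)"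
    by (rule nth_equalityI) (use assms in auto)
  moreover have "pair_exponents q i j ! ?p < pair_exponents q k l ! ?p"
    using assms by (auto simp: min_def)
  ultimately show ?thesis
    unfolding list_less_def lexord_take_index_conv using assms by auto
qed

lemma expressions_imp_pair_exponents:
  assumes "a \<in> expressions n M"
  obtains i j where "i \<le> j" "j < length (rooted_list n)"
    "a = pair_exponents (length (rooted_list n)) i j" "M = rooted_list n ! i + rooted_list n ! j"
proof -
  let ?L = "rooted_list n"
  have "sum_list a = 2" and len: "length a = length ?L"
    and sum: "(\<Sum>t<length ?L. repeat_mset (a ! t) (?L ! t)) = M"
    using assms unfolding expressions_def by auto
  then obtain i j where ij: "i \<le> j" "j < length ?L" "a = pair_exponents (length ?L) i j"
    using sum_list_eq_2_imp_pair_exponents by metis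
  moreover have "M = ?L ! i + ?L ! j"
    using sum ij sum_repeat_mset_pair_exponents[of i "length ?L" j "\<lambda>t. ?L ! t"] by simp
  ultimately show thesis using that by blast
qed

lemma pair_exponents_in_expressions:
  assumes "i < length (rooted_list n)" "j < length (rooted_list n)"
  shows "pair_exponents (length (rooted_list n)) i j \<in> expressions n (rooted_list n ! i + rooted_list n ! j)"
  using assms sum_repeat_mset_pair_exponents[of i _ j "\<lambda>t. rooted_list n ! t"]
  by (simp add: expressions_def sum_list_pair_exponents)

lemma finite_expressions: "finite (expressions n M)"
proof -
  let ?q = "length (rooted_list n)"
  have "expressions n M \<subseteq> (\<lambda>(i, j). pair_exponents ?q i j) ` ({..<?q} \<times> {..<?q})"
  proof
    fix a assume "a \<in> expressions n M"
    then obtain i j where "i \<le> j" "j < ?q" "a = pair_exponents ?q i j"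
      by (rule expressions_imp_pair_exponents)
    then show "a \<in> (\<lambda>(i, j). pair_exponents ?q i j) ` ({..<?q} \<times> {..<?q})" by force
  qed
  then show ?thesis by (rule finite_subset) simp
qed

lemma GJ_eq_set_rooted_list: "2 \<le> n \<Longrightarrow> GJ n = set (rooted_list n)"
  by (auto simp: GJ_def rooted_list_eq_map_mset_set set_rooted_covers)

lemma max_expression_FJ2:
  assumes "2 \<le> n" "M \<in> FJ2 n"
  obtains i j where "i \<le> j" "j < length (rooted_list n)"
    "max_expression n M = pair_exponents (length (rooted_list n)) i j"
    "M = rooted_list n ! i + rooted_list n ! j"
proof -
  obtain i j where "i < length (rooted_list n)" "j < length (rooted_list n)"
    "M = rooted_list n ! i + rooted_list n ! j"
    using assms unfolding FJ2_def GJ_eq_set_rooted_list[OF assms(1)] by (auto simp: in_set_conv_nth)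
  then have "expressions n M \<noteq> {}" using pair_exponents_in_expressions by blast
  then have "max_expression n M \<in> expressions n M"
    unfolding max_expression_def using finite_expressions by (rule Max_in[rotated])
  then show thesis using that by (rule expressions_imp_pair_exponents)
qed

lemma rooted_gt_if_earlier_summand:
  assumes "max_expression n U = pair_exponents (length (rooted_list n)) i j"
    and "i \<le> j" "j < length (rooted_list n)" "k < i" "l < length (rooted_list n)"
  shows "rooted_gt n (rooted_list n ! k + rooted_list n ! l) U"
proof -
  let ?q = "length (rooted_list n)"
  have "pair_exponents ?q k l \<in> expressions n (rooted_list n ! k + rooted_list n ! l)"
    using assms by (intro pair_exponents_in_expressions) auto
  then have "pair_exponents ?q k l \<le> max_expression n (rooted_list n ! k + rooted_list n ! l)"
    unfolding max_expression_def using finite_expressions by (rule Max_ge[rotated])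
  moreover have "max_expression n U < pair_exponents ?q k l"
    using assms by (auto intro: pair_exponents_less)
  ultimately show ?thesis unfolding rooted_gt_def by simp
qed

lemma GJ2_strictly_below:
  assumes "U \<in> FJ2 n - GJ2 n"
  obtains V where "V \<in> GJ2 n" "V \<subset># U"
proof -
  let ?S = "{N \<in> FJ2 n. N \<subset># U}"
  obtain N where "N \<in> FJ2 n" "N \<subseteq># U" "N \<noteq> U" using assms unfolding GJ2_def by blast
  then have "N \<in> ?S" by (simp add: subset_mset.le_neq_trans)
  with wf_subset_mset_rel obtain V where V: "V \<in> ?S" and min: "\<And>N. N \<subset># V \<Longrightarrow> N \<notin> ?S"
    by (rule wfE_min) auto
  have "N = V" if "N \<in> FJ2 n" "N \<subseteq># V" for N
  proof (rule ccontr)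
    assume "N \<noteq> V"
    then have "N \<subset># V" using that(2) by (simp add: subset_mset.le_neq_trans)
    then show False using min[of N] V that(1) subset_mset.less_trans by auto
  qed
  then have "V \<in> GJ2 n" using V unfolding GJ2_def by blast
  with V show thesis using that by blast
qed

lemma sorted_wrt_nth_index_less:
  assumes "asymp R" "sorted_wrt R xs" "i < length xs" "j < length xs" "R (xs ! i) (xs ! j)"
  shows "i < j"
proof (rule ccontr)
  assume "\<not> i < j"
  then consider "j < i" | "i = j" by linarith
  then show False
  proof cases
    case 1
    then have "R (xs ! j) (xs ! i)" using assms(2,3) sorted_wrt_nth_less by blast
    then show False using assms(1,5) asympD by metis
  next
    case 2
    then show False using assms(1,5) asympD by metis
  qed
qed

theorem lemma4p5:
  fixes n :: nat and U :: "nat multiset"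
  assumes "n \<ge> 2"
    and "U \<in> FJ2 n - GJ2 n"
  shows "\<exists>V \<in> GJ2 n. rooted_gt n V U \<and> V \<subseteq># U"
proof -
  let ?R = "rooted_covers n"
  have L: "rooted_list n = map mset_set ?R" by (rule rooted_list_eq_map_mset_set)
  have covers: "set ?R = {C. is_min_vertex_cover n C}" using assms(1) by (rule set_rooted_covers)
  obtain V where V: "V \<in> GJ2 n" "V \<subset># U" using assms(2) by (rule GJ2_strictly_below)
  obtain i j where ij: "i \<le> j" "j < length ?R"
      "max_expression n U = pair_exponents (length (rooted_list n)) i j"
    and U: "U = mset_set (?R ! i) + mset_set (?R ! j)"
    using assms L by (auto elim: max_expression_FJ2)
  obtain C D where CD: "is_min_vertex_cover n C" "is_min_vertex_cover n D" "V = mset_set C + mset_set D"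
    using V(1) unfolding GJ2_def FJ2_def GJ_def by blast
  have "is_min_vertex_cover n (?R ! i)" "is_min_vertex_cover n (?R ! j)"
    using ij covers nth_mem by fastforce+
  then obtain C' D' where "is_min_vertex_cover n C'" "is_min_vertex_cover n D'"
      and V': "V = mset_set C' + mset_set D'" and "colex_less C' (?R ! i)"
    using min_cover_pair_exchange CD V(2) U by metis
  then obtain k l where kl: "k < length ?R" "l < length ?R" "C' = ?R ! k" "D' = ?R ! l"
    using covers by (metis in_set_conv_nth mem_Collect_eq)
  have "k < i"
    using sorted_wrt_nth_index_less[OF asymp_colex_less sorted_rooted_covers] kl ij \<open>colex_less C' (?R ! i)\<close>
    by fastforce
  then have "rooted_gt n V U"
    using rooted_gt_if_earlier_summand[OF ij(3)] ij kl V' L by fastforce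
  with V show ?thesis by (blast intro: subset_mset.less_imp_le)
qed

end
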